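(* For positive integers $m\ne n$, the virtual knots $K_m$ and $K_n$ are not virtually equivalent, where $K_n$ denotes any virtual knot diagram whose arrow diagram is ${\mathcal A}_n$. (They are distinguished by the generalized Alexander polynomial obtained from the Alexander biquandle.)
   Context: A virtual knot diagram is a generic immersion of an oriented circle in the plane in which each double point is a real crossing (with over/under information) or a virtual crossing. Virtual equivalence is generated by planar isotopy, the classical Reidemeister moves R1–R3, the virtual moves V1–V3 (Reidemeister moves with all crossings virtual) and V4 (a strand with two consecutive virtual crossings passes across a real crossing). The arrow diagram of a diagram is the counterclockwise-oriented parametrizing circle with one arrow per real crossing joining its two preimages, pointing from the overcrossing preimage to the undercrossing preimage; an endpoint has sign $+$ if, viewing its strand in the direction of orientation, the other strand passes from right to left, and $-$ otherwise. The arrow diagram ${\mathcal A}_n$ has arrows $x,y_1,\dots,y_n$ with endpoints in counterclockwise order $X^+,Y_1^+,\dots,Y_n^+,X^-,Y_n^-,\dots,Y_1^-$; $x$ points from $X^+$ to $X^-$; $y_j$ points from $Y_j^-$ to $Y_j^+$ if $n-j$ is even and from $Y_j^+$ to $Y_j^-$ if $n-j$ is odd. *)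

theory Defs
  imports Main
begin

text \<open>
Combinatorial model of virtual knots via arrow (Gauss) diagrams.
A diagram is a cyclic word of endpoint letters (c, ov, sg) listed in the
order met when traversing the parametrizing circle in its orientation:
c is the crossing (arrow) label, ov = True iff the endpoint is the
overcrossing preimage (tail of the arrow), sg = True iff the endpoint
sign is +.
\<close>

type_synonym letter = "nat \<times> bool \<times> bool"
type_synonym gword = "letter list"

definition gauss_wf :: "gword \<Rightarrow> bool" where
  "gauss_wf w \<longleftrightarrow>
     (\<forall>c \<in> fst ` set w. \<exists>ov sg. filter (\<lambda>l. fst l = c) w = [(c, ov, sg), (c, \<not> ov, \<not> sg)])"

text \<open>Three local strands (lines) 1,2,3 with heights
h1,h2,h3 (distinct), crossing labels k12,k13,k23, orientation bits e1,e2,e3 of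
the lines relative to a counterclockwise traversal of the triangle and a
handedness bit eta.  The endpoint sign on line i at its crossing with line j
is + iff line j passes from right to left.  The pair of letters on line i,
in order of traversal:\<close>

definition r3_sg :: "bool \<Rightarrow> bool \<Rightarrow> bool \<Rightarrow> bool" where
  "r3_sg eta ei ej = ((ei = ej) = eta)"

definition r3_P1 :: "bool \<Rightarrow> bool \<Rightarrow> bool \<Rightarrow> bool \<Rightarrow> nat \<Rightarrow> nat \<Rightarrow> nat \<Rightarrow> nat \<Rightarrow> nat \<Rightarrow> nat \<Rightarrow> gword" where
  "r3_P1 e1 e2 e3 eta h1 h2 h3 k12 k13 k23 =
     (let L12 = (k12, h2 < h1, r3_sg eta e1 e2);
          L13 = (k13, h3 < h1, \<not> r3_sg eta e3 e1)
      in if e1 then [L13, L12] else [L12, L13])"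

definition r3_P2 :: "bool \<Rightarrow> bool \<Rightarrow> bool \<Rightarrow> bool \<Rightarrow> nat \<Rightarrow> nat \<Rightarrow> nat \<Rightarrow> nat \<Rightarrow> nat \<Rightarrow> nat \<Rightarrow> gword" where
  "r3_P2 e1 e2 e3 eta h1 h2 h3 k12 k13 k23 =
     (let L21 = (k12, h1 < h2, \<not> r3_sg eta e1 e2);
          L23 = (k23, h3 < h2, r3_sg eta e2 e3)
      in if e2 then [L21, L23] else [L23, L21])"

definition r3_P3 :: "bool \<Rightarrow> bool \<Rightarrow> bool \<Rightarrow> bool \<Rightarrow> nat \<Rightarrow> nat \<Rightarrow> nat \<Rightarrow> nat \<Rightarrow> nat \<Rightarrow> nat \<Rightarrow> gword" where
  "r3_P3 e1 e2 e3 eta h1 h2 h3 k12 k13 k23 =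
     (let L32 = (k23, h2 < h3, \<not> r3_sg eta e2 e3);
          L31 = (k13, h1 < h3, r3_sg eta e3 e1)
      in if e3 then [L32, L31] else [L31, L32])"

definition labels :: "gword \<Rightarrow> nat set" where
  "labels w = fst ` set w"

text \<open>Elementary moves on arrow diagrams: cyclic rotation, relabelling of
arrows, and the Reidemeister moves R1, R2 (both orientations), R3 (all oriented
versions realized by a triangle of three strands).  Planar isotopy and the
virtual moves V1--V4 do not change the arrow diagram.\<close>

inductive gmove :: "gword \<Rightarrow> gword \<Rightarrow> bool" where
  rot: "gmove (x # w) (w @ [x])"
| relabel: "inj f \<Longrightarrow> gmove w (map (\<lambda>(c, ov, sg). (f c, ov, sg)) w)"
| r1: "c \<notin> labels (w1 @ w2) \<Longrightarrow>
       gmove (w1 @ w2) (w1 @ [(c, ov, sg), (c, \<not> ov, \<not> sg)] @ w2)"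
| r2a: "c \<noteq> d \<Longrightarrow> c \<notin> labels (w1 @ w2 @ w3) \<Longrightarrow> d \<notin> labels (w1 @ w2 @ w3) \<Longrightarrow>
       gmove (w1 @ w2 @ w3)
             (w1 @ [(c, True, sg), (d, True, \<not> sg)] @ w2 @ [(c, False, \<not> sg), (d, False, sg)] @ w3)"
| r2b: "c \<noteq> d \<Longrightarrow> c \<notin> labels (w1 @ w2 @ w3) \<Longrightarrow> d \<notin> labels (w1 @ w2 @ w3) \<Longrightarrow>
       gmove (w1 @ w2 @ w3)
             (w1 @ [(c, True, sg), (d, True, \<not> sg)] @ w2 @ [(d, False, sg), (c, False, \<not> sg)] @ w3)"
| r3: "h1 \<noteq> h2 \<Longrightarrow> h1 \<noteq> h3 \<Longrightarrow> h2 \<noteq> h3 \<Longrightarrow>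
       k12 \<noteq> k13 \<Longrightarrow> k12 \<noteq> k23 \<Longrightarrow> k13 \<noteq> k23 \<Longrightarrow>
       {k12, k13, k23} \<inter> labels (w1 @ w2 @ w3 @ w4) = {} \<Longrightarrow>
       gmove (w1 @ r3_P1 e1 e2 e3 eta h1 h2 h3 k12 k13 k23 @ w2
                 @ r3_P2 e1 e2 e3 eta h1 h2 h3 k12 k13 k23 @ w3
                 @ r3_P3 e1 e2 e3 eta h1 h2 h3 k12 k13 k23 @ w4)
             (w1 @ r3_P1 (\<not> e1) (\<not> e2) (\<not> e3) eta h1 h2 h3 k12 k13 k23 @ w2
                 @ r3_P2 (\<not> e1) (\<not> e2) (\<not> e3) eta h1 h2 h3 k12 k13 k23 @ w3
                 @ r3_P3 (\<not> e1) (\<not> e2) (\<not> e3) eta h1 h2 h3 k12 k13 k23 @ w4)"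

definition virt_equiv :: "gword \<Rightarrow> gword \<Rightarrow> bool" where
  "virt_equiv = (\<lambda>u v. gmove u v \<or> gmove v u)\<^sup>*\<^sup>*"

text \<open>The arrow diagram A_n: arrow x has label 0, arrow y_j has label j.
Letters in counterclockwise order X+, Y1+,...,Yn+, X-, Yn-,...,Y1-.
x points from X+ to X- (X+ is over); y_j points from Yj- to Yj+ if n-j is even
(so Yj+ is over iff n-j is odd).\<close>

definition arrowA :: "nat \<Rightarrow> gword" where
  "arrowA n =
     [(0, True, True)]
     @ map (\<lambda>j. (j, odd (n - j), True)) [1..<n+1]
     @ [(0, False, False)]
     @ map (\<lambda>j. (j, even (n - j), False)) (rev [1..<n+1])"

end

theory Submission
  imports Defs
begin

text \<open>
The distinguishing invariant is the affine index polynomial.  Give every arrow e the index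
computed from the signs of the endpoints met on the arc from its tail to its head, and let
the coefficient at a nonzero k be the sum of the signs of the arrows of index k.  Rotation and
relabelling do not change indices, an R1 arrow has index 0, the two arrows created by an R2
move have equal index and opposite signs, and an R3 move only swaps adjacent endpoints of the
three arrows involved, which changes no index.  In A_n the arrow x has (doubled) index 2n
and every y_j has index 2 or -2, so the coefficient at 2 max m n separates K_m from K_n.
\<close>

definition letter_sign :: "letter \<Rightarrow> int" where
  "letter_sign l = (if snd (snd l) then 1 else -1)"

definition sign_sum :: "gword \<Rightarrow> int" where
  "sign_sum w = sum_list (map letter_sign w)"

definition chord_ends :: "nat \<Rightarrow> gword \<Rightarrow> gword" where
  "chord_ends e w = filter (\<lambda>l. fst l = e) w"

text \<open>The letters not on arrow e count positively between the two endpoints of e and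
negatively outside them; k is the number of endpoints of e passed before w starts.\<close>

fun arc_balance :: "nat \<Rightarrow> nat \<Rightarrow> gword \<Rightarrow> int" where
  "arc_balance e k [] = 0"
| "arc_balance e k (l # w) =
     (if fst l = e then arc_balance e (Suc k) w
      else (if k = 1 then letter_sign l else - letter_sign l) + arc_balance e k w)"

text \<open>On a Gauss diagram the signs of all letters add up to 0, so this is twice the sign
sum over the arc from the tail to the head of e.\<close>

definition chord_index :: "gword \<Rightarrow> nat \<Rightarrow> int" where
  "chord_index w e =
     (if fst (snd (hd (chord_ends e w))) then arc_balance e 0 w else - arc_balance e 0 w)"

definition chord_sign :: "gword \<Rightarrow> nat \<Rightarrow> int" where
  "chord_sign w e =
     (if fst (snd (chord_ends e w ! 0)) then letter_sign (chord_ends e w ! 0)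
      else letter_sign (chord_ends e w ! 1))"

definition index_coeff :: "int \<Rightarrow> gword \<Rightarrow> int" where
  "index_coeff k w = (\<Sum>e\<in>labels w. if chord_index w e = k then chord_sign w e else 0)"

abbreviation relabel_word :: "(nat \<Rightarrow> nat) \<Rightarrow> gword \<Rightarrow> gword" where
  "relabel_word f w \<equiv> map (\<lambda>(c, ov, sg). (f c, ov, sg)) w"

lemma labels_simps [simp]:
  "labels [] = {}" "labels (l # w) = insert (fst l) (labels w)"
  "labels (u @ v) = labels u \<union> labels v" "labels (rev w) = labels w"
  by (auto simp: labels_def)

lemma finite_labels [simp]: "finite (labels w)"
  by (simp add: labels_def)

lemma labels_relabel_word: "labels (relabel_word f w) = f ` labels w"
  by (induction w) auto

lemma sign_sum_simps [simp]:
  "sign_sum [] = 0" "sign_sum (l # w) = letter_sign l + sign_sum w"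
  "sign_sum (u @ v) = sign_sum u + sign_sum v" "sign_sum (rev w) = sign_sum w"
  by (auto simp: sign_sum_def simp flip: rev_map)

lemma chord_ends_simps [simp]:
  "chord_ends e [] = []"
  "chord_ends e (l # w) = (if fst l = e then l # chord_ends e w else chord_ends e w)"
  "chord_ends e (u @ v) = chord_ends e u @ chord_ends e v"
  "chord_ends e (rev w) = rev (chord_ends e w)"
  by (auto simp: chord_ends_def rev_filter)

lemma chord_ends_eq_Nil_iff: "chord_ends e w = [] \<longleftrightarrow> e \<notin> labels w"
  by (induction w) auto

lemma chord_ends_not_label [simp]: "e \<notin> labels w \<Longrightarrow> chord_ends e w = []"
  by (simp add: chord_ends_eq_Nil_iff)

lemma rev_chord_ends_if_distinct:
  "distinct (map fst w) \<Longrightarrow> rev (chord_ends e w) = chord_ends e w"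
  by (induction w) (auto simp: labels_def image_iff)

lemma chord_ends_relabel_word:
  "inj f \<Longrightarrow> chord_ends (f e) (relabel_word f w) = relabel_word f (chord_ends e w)"
  by (induction w) (auto simp: inj_eq split: prod.split)

lemma chord_ends_eq_pair_iff:
  "chord_ends c w = [(c, ov, sg), (c, \<not> ov, \<not> sg)]
    \<longleftrightarrow> map snd (chord_ends c w) = [(ov, sg), (\<not> ov, \<not> sg)]"
proof -
  have "chord_ends c w = map (Pair c) (map snd (chord_ends c w))"
    by (induction w) auto
  then show ?thesis by auto
qed

lemma map_snd_relabel_word [simp]: "map snd (relabel_word f w) = map snd w"
  by (induction w) auto

lemma arc_balance_append:
  "arc_balance e k (u @ v) = arc_balance e k u + arc_balance e (k + length (chord_ends e u)) v"
  by (induction u arbitrary: k) auto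

lemma arc_balance_not_label:
  "e \<notin> labels w \<Longrightarrow> arc_balance e k w = (if k = 1 then sign_sum w else - sign_sum w)"
  by (induction w) auto

lemma arc_balance_relabel_word:
  "inj f \<Longrightarrow> arc_balance (f e) k (relabel_word f w) = arc_balance e k w"
  by (induction w arbitrary: k) (auto simp: inj_eq letter_sign_def)

text \<open>Passing the only endpoint of e in w exchanges the inner and the outer arc.\<close>

lemma arc_balance_single_end:
  "length (chord_ends e w) = 1 \<Longrightarrow> arc_balance e 1 w = - arc_balance e 0 w"
proof (induction w)
  case (Cons l w)
  then show ?case
    by (cases "fst l = e") (auto simp: chord_ends_eq_Nil_iff arc_balance_not_label)
qed simp

lemma arc_balance_rev_blocks:
  assumes disjoint: "labels (P1 @ P2 @ P3) \<inter> labels (w1 @ w2 @ w3 @ w4) = {}"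
    and local_balance: "e \<in> labels (P1 @ P2 @ P3) \<Longrightarrow>
      arc_balance e 0 P1 + arc_balance e (length (chord_ends e P1)) P2
        + arc_balance e (length (chord_ends e (P1 @ P2))) P3
      = arc_balance e 0 (rev P1) + arc_balance e (length (chord_ends e P1)) (rev P2)
        + arc_balance e (length (chord_ends e (P1 @ P2))) (rev P3)"
  shows "arc_balance e 0 (w1 @ P1 @ w2 @ P2 @ w3 @ P3 @ w4)
       = arc_balance e 0 (w1 @ rev P1 @ w2 @ rev P2 @ w3 @ rev P3 @ w4)"
proof (cases "e \<in> labels (P1 @ P2 @ P3)")
  case True
  then have "e \<notin> labels w1" "e \<notin> labels w2" "e \<notin> labels w3" "e \<notin> labels w4"
    using disjoint by auto
  then show ?thesis
    using local_balance[OF True] by (simp add: arc_balance_append algebra_simps)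
next
  case False
  then show ?thesis by (simp add: arc_balance_append arc_balance_not_label)
qed

lemma gauss_wf_iff_chord_ends:
  "gauss_wf w \<longleftrightarrow> (\<forall>c\<in>labels w. \<exists>ov sg. chord_ends c w = [(c, ov, sg), (c, \<not> ov, \<not> sg)])"
  by (simp add: gauss_wf_def labels_def chord_ends_def)

lemma sign_sum_eq_sum_chord_ends:
  "finite E \<Longrightarrow> labels w \<subseteq> E \<Longrightarrow> sign_sum w = (\<Sum>e\<in>E. sign_sum (chord_ends e w))"
proof (induction w)
  case (Cons l w)
  have "(\<Sum>e\<in>E. sign_sum (chord_ends e (l # w)))
      = (\<Sum>e\<in>E. (if fst l = e then letter_sign l else 0) + sign_sum (chord_ends e w))"
    by (rule sum.cong) auto
  also have "\<dots> = letter_sign l + (\<Sum>e\<in>E. sign_sum (chord_ends e w))"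
    using Cons.prems by (simp add: sum.distrib)
  finally show ?case using Cons by simp
qed simp

lemma sign_sum_gauss_wf:
  assumes "gauss_wf w"
  shows "sign_sum w = 0"
proof -
  have "sign_sum (chord_ends e w) = 0" if "e \<in> labels w" for e
    using assms that unfolding gauss_wf_iff_chord_ends by (auto simp: letter_sign_def)
  then show ?thesis by (simp add: sign_sum_eq_sum_chord_ends[of "labels w"])
qed

lemma gauss_wf_extend:
  assumes "labels v = labels u \<union> N"
    and "\<And>e. e \<in> N \<Longrightarrow> \<exists>ov sg. chord_ends e v = [(e, ov, sg), (e, \<not> ov, \<not> sg)]"
    and "\<And>e. e \<in> labels u \<Longrightarrow> chord_ends e v = chord_ends e u"
  shows "gauss_wf u = gauss_wf v"
  using assms unfolding gauss_wf_iff_chord_ends by (metis UnCI UnE)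

lemma opposite_pair_rotate:
  "fst x = c \<Longrightarrow> (\<exists>ov sg. x # F = [(c, ov, sg), (c, \<not> ov, \<not> sg)])
    \<longleftrightarrow> (\<exists>ov sg. F @ [x] = [(c, ov, sg), (c, \<not> ov, \<not> sg)])"
  by (cases x; cases F) auto

lemma r3_blocks_flip:
  "r3_P1 (\<not> e1) (\<not> e2) (\<not> e3) eta h1 h2 h3 k12 k13 k23 = rev (r3_P1 e1 e2 e3 eta h1 h2 h3 k12 k13 k23)"
  "r3_P2 (\<not> e1) (\<not> e2) (\<not> e3) eta h1 h2 h3 k12 k13 k23 = rev (r3_P2 e1 e2 e3 eta h1 h2 h3 k12 k13 k23)"
  "r3_P3 (\<not> e1) (\<not> e2) (\<not> e3) eta h1 h2 h3 k12 k13 k23 = rev (r3_P3 e1 e2 e3 eta h1 h2 h3 k12 k13 k23)"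
  by (simp_all add: r3_P1_def r3_P2_def r3_P3_def r3_sg_def Let_def)

lemma r3_blocks_labels:
  "labels (r3_P1 e1 e2 e3 eta h1 h2 h3 k12 k13 k23) = {k12, k13}"
  "labels (r3_P2 e1 e2 e3 eta h1 h2 h3 k12 k13 k23) = {k12, k23}"
  "labels (r3_P3 e1 e2 e3 eta h1 h2 h3 k12 k13 k23) = {k13, k23}"
  by (auto simp: r3_P1_def r3_P2_def r3_P3_def Let_def)

lemma r3_blocks_distinct:
  assumes "k12 \<noteq> k13" "k12 \<noteq> k23" "k13 \<noteq> k23"
  shows "distinct (map fst (r3_P1 e1 e2 e3 eta h1 h2 h3 k12 k13 k23))"
    "distinct (map fst (r3_P2 e1 e2 e3 eta h1 h2 h3 k12 k13 k23))"
    "distinct (map fst (r3_P3 e1 e2 e3 eta h1 h2 h3 k12 k13 k23))"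
  using assms by (auto simp: r3_P1_def r3_P2_def r3_P3_def Let_def)

lemma gauss_wf_gmove: "gmove u v \<Longrightarrow> gauss_wf u = gauss_wf v"
proof (induction rule: gmove.induct)
  case (rot x w)
  have "(\<exists>ov sg. chord_ends c (x # w) = [(c, ov, sg), (c, \<not> ov, \<not> sg)])
    \<longleftrightarrow> (\<exists>ov sg. chord_ends c (w @ [x]) = [(c, ov, sg), (c, \<not> ov, \<not> sg)])" for c
    using opposite_pair_rotate[of x c "chord_ends c w"] by auto
  then show ?case unfolding gauss_wf_iff_chord_ends by auto
next
  case (relabel f w)
  have "map snd (chord_ends (f c) (relabel_word f w)) = map snd (chord_ends c w)" for c
    by (simp only: chord_ends_relabel_word[OF relabel] map_snd_relabel_word)
  then show ?case
    unfolding gauss_wf_iff_chord_ends chord_ends_eq_pair_iff labels_relabel_word by simp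
next
  case (r1 c w1 w2 ov sg)
  then show ?case by (intro gauss_wf_extend[where N = "{c}"]) auto
next
  case (r2a c d w1 w2 w3 sg)
  then show ?case by (intro gauss_wf_extend[where N = "{c, d}"]) auto
next
  case (r2b c d w1 w2 w3 sg)
  then show ?case by (intro gauss_wf_extend[where N = "{c, d}"]) auto
next
  case (r3 h1 h2 h3 k12 k13 k23 w1 w2 w3 w4 e1 e2 e3 eta)
  then show ?case
    unfolding r3_blocks_flip
    by (intro gauss_wf_extend[where N = "{}"])
      (auto simp: rev_chord_ends_if_distinct r3_blocks_distinct)
qed

subsection \<open>Invariance of the index coefficients\<close>

lemma chord_index_sign_eqI:
  "chord_ends e u = chord_ends e v \<Longrightarrow> arc_balance e 0 u = arc_balance e 0 v
    \<Longrightarrow> chord_index u e = chord_index v e \<and> chord_sign u e = chord_sign v e"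
  by (simp add: chord_index_def chord_sign_def)

lemma index_coeff_extend:
  assumes labels: "labels v = labels u \<union> N" "labels u \<inter> N = {}"
    and old: "\<And>e. e \<in> labels u \<Longrightarrow>
      chord_index u e = chord_index v e \<and> chord_sign u e = chord_sign v e"
    and new: "(\<Sum>e\<in>N. if chord_index v e = k then chord_sign v e else 0) = 0"
  shows "index_coeff k u = index_coeff k v"
proof -
  have "finite N" using labels(1) finite_labels by (metis finite_Un)
  then have "index_coeff k v = (\<Sum>e\<in>labels u. if chord_index v e = k then chord_sign v e else 0)"
    unfolding index_coeff_def labels(1) using labels(2) new by (simp add: sum.union_disjoint)
  also have "\<dots> = index_coeff k u"
    unfolding index_coeff_def using old by (intro sum.cong) auto
  finally show ?thesis by simp
qed

lemma index_coeff_cong: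
  assumes "labels u = labels v"
    and "\<And>e. e \<in> labels u \<Longrightarrow> chord_index u e = chord_index v e \<and> chord_sign u e = chord_sign v e"
  shows "index_coeff k u = index_coeff k v"
  using assms by (intro index_coeff_extend[where N = "{}"]) auto

lemma chord_index_relabel_word:
  assumes "inj f" "e \<in> labels w"
  shows "chord_index (relabel_word f w) (f e) = chord_index w e"
proof -
  obtain l ls where "chord_ends e w = l # ls"
    using assms(2) by (metis chord_ends_eq_Nil_iff neq_Nil_conv)
  then show ?thesis
    unfolding chord_index_def chord_ends_relabel_word[OF assms(1)] arc_balance_relabel_word[OF assms(1)]
    by (simp split: prod.split)
qed

lemma chord_sign_relabel_word:
  assumes "inj f"
  shows "chord_sign (relabel_word f w) (f e) = chord_sign w e"
proof -
  have "chord_ends e w = [] \<or> (\<exists>l. chord_ends e w = [l]) \<or> (\<exists>l l' ls. chord_ends e w = l # l' # ls)"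
    by (metis list.exhaust)
  then show ?thesis
    unfolding chord_sign_def chord_ends_relabel_word[OF assms]
    by (auto simp: letter_sign_def split: prod.split)
qed

lemma index_coeff_relabel_word:
  assumes "inj f"
  shows "index_coeff k (relabel_word f w) = index_coeff k w"
proof -
  have "inj_on f (labels w)"
    using assms by (rule inj_on_subset) simp
  then have "index_coeff k (relabel_word f w)
      = (\<Sum>e\<in>labels w. if chord_index (relabel_word f w) (f e) = k
                        then chord_sign (relabel_word f w) (f e) else 0)"
    unfolding index_coeff_def labels_relabel_word by (simp only: sum.reindex comp_def)
  also have "\<dots> = index_coeff k w"
    unfolding index_coeff_def
    by (intro sum.cong) (simp_all only: chord_index_relabel_word[OF assms]
        chord_sign_relabel_word[OF assms])
  finally show ?thesis .
qed

lemma index_coeff_rotate: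
  assumes "gauss_wf (x # w)"
  shows "index_coeff k (x # w) = index_coeff k (w @ [x])"
proof (rule index_coeff_cong)
  fix e assume "e \<in> labels (x # w)"
  then obtain ov sg where ends: "chord_ends e (x # w) = [(e, ov, sg), (e, \<not> ov, \<not> sg)]"
    using assms gauss_wf_iff_chord_ends by blast
  show "chord_index (x # w) e = chord_index (w @ [x]) e \<and> chord_sign (x # w) e = chord_sign (w @ [x]) e"
  proof (cases "fst x = e")
    case True
    then have "x = (e, ov, sg)" and w: "chord_ends e w = [(e, \<not> ov, \<not> sg)]"
      using ends by auto
    moreover have "arc_balance e 1 w = - arc_balance e 0 w"
      using arc_balance_single_end w by simp
    ultimately show ?thesis
      by (auto simp: chord_index_def chord_sign_def arc_balance_append)
  next
    case False
    then show ?thesis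
      using ends by (auto simp: chord_index_def chord_sign_def arc_balance_append)
  qed
qed simp

lemma index_coeff_r1:
  assumes c: "c \<notin> labels (w1 @ w2)" and wf: "gauss_wf (w1 @ w2)" and "k \<noteq> 0"
  shows "index_coeff k (w1 @ w2) = index_coeff k (w1 @ [(c, ov, sg), (c, \<not> ov, \<not> sg)] @ w2)"
    (is "_ = index_coeff k ?v")
proof (rule index_coeff_extend[where N = "{c}"])
  have "sign_sum w1 + sign_sum w2 = 0"
    using sign_sum_gauss_wf[OF wf] by simp
  then have "chord_index ?v c = 0"
    using c by (simp add: chord_index_def arc_balance_append arc_balance_not_label)
  then show "(\<Sum>e\<in>{c}. if chord_index ?v e = k then chord_sign ?v e else 0) = 0"
    using \<open>k \<noteq> 0\<close> by simp
  fix e assume "e \<in> labels (w1 @ w2)"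
  then have "e \<noteq> c" using c by auto
  then show "chord_index (w1 @ w2) e = chord_index ?v e \<and> chord_sign (w1 @ w2) e = chord_sign ?v e"
    by (intro chord_index_sign_eqI)
      (simp_all add: arc_balance_append arc_balance_not_label letter_sign_def)
qed (use c in auto)

lemma index_coeff_r2:
  assumes cd: "c \<noteq> d" "c \<notin> labels (w1 @ w2 @ w3)" "d \<notin> labels (w1 @ w2 @ w3)"
    and B: "B = [(c, False, \<not> sg), (d, False, sg)] \<or> B = [(d, False, sg), (c, False, \<not> sg)]"
  shows "index_coeff k (w1 @ w2 @ w3)
       = index_coeff k (w1 @ [(c, True, sg), (d, True, \<not> sg)] @ w2 @ B @ w3)"
    (is "_ = index_coeff k ?v")
proof (rule index_coeff_extend[where N = "{c, d}"])
  have "chord_index ?v c = chord_index ?v d" "chord_sign ?v c = - chord_sign ?v d"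
    using cd B by (auto simp: chord_index_def chord_sign_def arc_balance_append
        arc_balance_not_label letter_sign_def)
  then show "(\<Sum>e\<in>{c, d}. if chord_index ?v e = k then chord_sign ?v e else 0) = 0"
    using cd(1) by simp
  fix e assume "e \<in> labels (w1 @ w2 @ w3)"
  then have "e \<noteq> c" "e \<noteq> d" using cd by auto
  then show "chord_index (w1 @ w2 @ w3) e = chord_index ?v e
      \<and> chord_sign (w1 @ w2 @ w3) e = chord_sign ?v e"
    using B by (intro chord_index_sign_eqI)
      (auto simp: arc_balance_append arc_balance_not_label letter_sign_def)
qed (use cd B in auto)

lemma index_coeff_rev_blocks:
  assumes disjoint: "labels (P1 @ P2 @ P3) \<inter> labels (w1 @ w2 @ w3 @ w4) = {}"
    and distinct: "distinct (map fst P1)" "distinct (map fst P2)" "distinct (map fst P3)"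
    and local_balance: "\<And>e. e \<in> labels (P1 @ P2 @ P3) \<Longrightarrow>
      arc_balance e 0 P1 + arc_balance e (length (chord_ends e P1)) P2
        + arc_balance e (length (chord_ends e (P1 @ P2))) P3
      = arc_balance e 0 (rev P1) + arc_balance e (length (chord_ends e P1)) (rev P2)
        + arc_balance e (length (chord_ends e (P1 @ P2))) (rev P3)"
  shows "index_coeff k (w1 @ P1 @ w2 @ P2 @ w3 @ P3 @ w4)
       = index_coeff k (w1 @ rev P1 @ w2 @ rev P2 @ w3 @ rev P3 @ w4)"
  by (intro index_coeff_cong chord_index_sign_eqI arc_balance_rev_blocks[OF disjoint local_balance])
    (auto simp: rev_chord_ends_if_distinct[OF distinct(1)] rev_chord_ends_if_distinct[OF distinct(2)]
      rev_chord_ends_if_distinct[OF distinct(3)])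

text \<open>The local picture of an R3 move is a finite check over the orientations and the
handedness; the heights do not enter the signs.\<close>

lemma r3_local_balance:
  fixes e1 e2 e3 eta :: bool and h1 h2 h3 k12 k13 k23 :: nat
  defines "P1 \<equiv> r3_P1 e1 e2 e3 eta h1 h2 h3 k12 k13 k23"
    and "P2 \<equiv> r3_P2 e1 e2 e3 eta h1 h2 h3 k12 k13 k23"
    and "P3 \<equiv> r3_P3 e1 e2 e3 eta h1 h2 h3 k12 k13 k23"
  assumes "k12 \<noteq> k13" "k12 \<noteq> k23" "k13 \<noteq> k23" and "e \<in> {k12, k13, k23}"
  shows "arc_balance e 0 P1 + arc_balance e (length (chord_ends e P1)) P2
        + arc_balance e (length (chord_ends e (P1 @ P2))) P3
      = arc_balance e 0 (rev P1) + arc_balance e (length (chord_ends e P1)) (rev P2)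
        + arc_balance e (length (chord_ends e (P1 @ P2))) (rev P3)"
  using assms(4-7) unfolding P1_def P2_def P3_def
  by (cases e1; cases e2; cases e3; cases eta)
    (auto simp: r3_P1_def r3_P2_def r3_P3_def Let_def r3_sg_def letter_sign_def)

lemma index_coeff_gmove:
  "gmove u v \<Longrightarrow> gauss_wf u \<Longrightarrow> k \<noteq> 0 \<Longrightarrow> index_coeff k u = index_coeff k v"
proof (induction rule: gmove.induct)
  case (rot x w)
  show ?case using rot.prems(1) by (rule index_coeff_rotate)
next
  case (relabel f w)
  show ?case by (rule index_coeff_relabel_word[OF relabel.hyps, symmetric])
next
  case (r1 c w1 w2 ov sg)
  then show ?case by (rule index_coeff_r1)
next
  case (r2a c d w1 w2 w3 sg)
  then show ?case by (intro index_coeff_r2) auto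
next
  case (r2b c d w1 w2 w3 sg)
  then show ?case by (intro index_coeff_r2) auto
next
  case (r3 h1 h2 h3 k12 k13 k23 w1 w2 w3 w4 e1 e2 e3 eta)
  then show ?case
    unfolding r3_blocks_flip
    by (intro index_coeff_rev_blocks r3_blocks_distinct r3_local_balance)
      (auto simp: r3_blocks_labels)
qed

lemma virt_equiv_index_coeff:
  assumes "virt_equiv u v" "gauss_wf u" "k \<noteq> 0"
  shows "gauss_wf v \<and> index_coeff k u = index_coeff k v"
  using assms(1) unfolding virt_equiv_def
proof (induction rule: rtranclp_induct)
  case (step y z)
  then have "gauss_wf y" "index_coeff k u = index_coeff k y" by auto
  with step.hyps(2) show ?case
    using gauss_wf_gmove index_coeff_gmove[OF _ _ assms(3)] by metis
qed (use assms(2) in simp)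

subsection \<open>The diagrams A_n\<close>

lemma labels_map_ends [simp]: "labels (map (\<lambda>j. (j, P j, b)) xs) = set xs"
  by (induction xs) auto

lemma sign_sum_map_ends [simp]:
  "sign_sum (map (\<lambda>j. (j, P j, b)) xs) = (if b then int (length xs) else - int (length xs))"
  by (induction xs) (auto simp: letter_sign_def)

lemma labels_arrowA: "labels (arrowA n) = {0..n}"
  by (auto simp: arrowA_def simp del: upt_Suc)

lemma arrowA_chord_x:
  "chord_ends 0 (arrowA n) = [(0, True, True), (0, False, False)]"
  "chord_index (arrowA n) 0 = 2 * int n"
  "chord_sign (arrowA n) 0 = 1"
  by (auto simp: arrowA_def chord_index_def chord_sign_def arc_balance_append
      arc_balance_not_label letter_sign_def)

lemma arrowA_chord_y:
  assumes "1 \<le> j" "j \<le> n"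
  shows "chord_ends j (arrowA n) = [(j, odd (n - j), True), (j, \<not> odd (n - j), False)]"
    and "chord_index (arrowA n) j \<in> {2, -2}"
proof -
  have "[1..<n+1] = [1..<j] @ [j..<n+1]"
    using assms upt_add_eq_append[of 1 j "n + 1 - j"] by simp
  also have "[j..<n+1] = j # [Suc j..<n+1]"
    using assms by (simp add: upt_conv_Cons)
  finally have split: "[1..<n+1] = [1..<j] @ j # [Suc j..<n+1]" .
  show "chord_ends j (arrowA n) = [(j, odd (n - j), True), (j, \<not> odd (n - j), False)]"
    using assms unfolding arrowA_def split by simp
  have "arc_balance j 0 (arrowA n) = -2"
    using assms unfolding arrowA_def split
    by (simp add: arc_balance_append arc_balance_not_label letter_sign_def)
  then show "chord_index (arrowA n) j \<in> {2, -2}"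
    by (simp add: chord_index_def)
qed

lemma gauss_wf_arrowA: "gauss_wf (arrowA n)"
  unfolding gauss_wf_iff_chord_ends labels_arrowA
proof
  fix c assume "c \<in> {0..n}"
  then consider "c = 0" | "1 \<le> c" "c \<le> n" by force
  then show "\<exists>ov sg. chord_ends c (arrowA n) = [(c, ov, sg), (c, \<not> ov, \<not> sg)]"
    by cases (use arrowA_chord_x arrowA_chord_y in auto)
qed

lemma index_coeff_arrowA:
  assumes "2 \<le> N"
  shows "index_coeff (2 * int N) (arrowA n) = (if n = N then 1 else 0)"
proof -
  have "chord_index (arrowA n) e \<noteq> 2 * int N" if "e \<in> {1..n}" for e
    using arrowA_chord_y(2)[of e n] that assms by auto
  then have "(\<Sum>e\<in>{1..n}. if chord_index (arrowA n) e = 2 * int N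
      then chord_sign (arrowA n) e else 0) = 0"
    by simp
  then show ?thesis
    unfolding index_coeff_def labels_arrowA Icc_eq_insert_lb_nat[OF le0]
    using assms by (simp add: arrowA_chord_x)
qed

theorem theorem11:
  fixes m n :: nat
  assumes "0 < m" and "0 < n" and "m \<noteq> n"
  shows "\<not> virt_equiv (arrowA m) (arrowA n)"
proof
  assume equiv: "virt_equiv (arrowA m) (arrowA n)"
  define N where "N = max m n"
  have "2 \<le> N"
    using assms unfolding N_def by auto
  then have "index_coeff (2 * int N) (arrowA m) = index_coeff (2 * int N) (arrowA n)"
    using virt_equiv_index_coeff[OF equiv gauss_wf_arrowA] by simp
  then show False
    using index_coeff_arrowA[OF \<open>2 \<le> N\<close>] \<open>m \<noteq> n\<close> unfolding N_def
    by (auto simp: max_def split: if_splits)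
qed

end
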